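(* If $\mathcal A\subseteq\binom{[n]}{k}$ is $t$-intersecting, then for every $1\le i<j\le n$, \[\zeta_{k-1}(\Delta_{ij}(\mathcal A))\ge\zeta_{k-1}(\mathcal A).\]
   Context: A family is $t$-intersecting if any two members share at least $t$ elements. For $\mathcal F\subseteq\binom{[n]}{k}$, $\zeta_{k-1}(\mathcal F)=|\{\{F,G\}:F,G\in\mathcal F,\ |F\cap G|=k-1\}|$. Shift operation: for $i,j\in[n]$ and $A\in\mathcal A$, $\delta_{ij}(A)=(A\setminus\{j\})\cup\{i\}$ if $j\in A$, $i\notin A$ and $(A\setminus\{j\})\cup\{i\}\notin\mathcal A$; otherwise $\delta_{ij}(A)=A$. Then $\Delta_{ij}(\mathcal A)=\{\delta_{ij}(A):A\in\mathcal A\}$. *)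

theory Defs
  imports Main
begin

definition t_intersecting :: "nat \<Rightarrow> nat set set \<Rightarrow> bool" where
  "t_intersecting t \<A> \<longleftrightarrow> (\<forall>F\<in>\<A>. \<forall>G\<in>\<A>. F \<noteq> G \<longrightarrow> t \<le> card (F \<inter> G))"

definition zeta :: "nat \<Rightarrow> nat set set \<Rightarrow> nat" where
  "zeta k \<F> = card {{F, G} | F G. F \<in> \<F> \<and> G \<in> \<F> \<and> F \<noteq> G \<and> card (F \<inter> G) = k - 1}"

definition shift_set :: "nat \<Rightarrow> nat \<Rightarrow> nat set set \<Rightarrow> nat set \<Rightarrow> nat set" where
  "shift_set i j \<A> A =
     (if j \<in> A \<and> i \<notin> A \<and> insert i (A - {j}) \<notin> \<A> then insert i (A - {j}) else A)"

definition shift :: "nat \<Rightarrow> nat \<Rightarrow> nat set set \<Rightarrow> nat set set" where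
  "shift i j \<A> = shift_set i j \<A> ` \<A>"

end

theory Submission
  imports Defs
begin

text \<open>
  Pairs \<open>{F, G}\<close> with \<open>|F \<inter> G| = k - 1\<close> are sent to the pair of their shifts, which is again
  such a pair unless one member moves while the other is blocked (its shift already belongs to the
  family); such a pair is sent to \<open>{\<sigma> F, \<sigma> G}\<close> instead, where \<open>\<sigma> X = X - {j} \<union> {i}\<close>. Both
  images lie in \<open>\<Delta>\<^sub>i\<^sub>j(\<A>)\<close>, and the only possible collision, \<open>{\<sigma> F, \<sigma> G}\<close> being the shift of
  \<open>{F, \<sigma> G}\<close>, is excluded because \<open>|F \<inter> \<sigma> G| = k - 2\<close>.
\<close>

definition exchange :: "nat \<Rightarrow> nat \<Rightarrow> nat set \<Rightarrow> nat set" where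
  "exchange i j A = insert i (A - {j})"

lemma inj_on_exchange: "inj_on (exchange i j) {A. j \<in> A \<and> i \<notin> A}"
proof (rule inj_onI)
  have undo: "insert j (exchange i j A - {i}) = A" if "A \<in> {A. j \<in> A \<and> i \<notin> A}" for A
    using that unfolding exchange_def by blast
  fix A B assume "A \<in> {A. j \<in> A \<and> i \<notin> A}" "B \<in> {A. j \<in> A \<and> i \<notin> A}"
    and "exchange i j A = exchange i j B"
  then show "A = B" using undo by metis
qed

lemma card_exchange:
  assumes "finite A" "j \<in> A" "i \<notin> A"
  shows "card (exchange i j A) = card A"
proof -
  have "card (exchange i j A) = Suc (card (A - {j}))"
    using assms by (simp add: exchange_def)
  also have "\<dots> = card A" using assms(1,2) by (rule card_Suc_Diff1)
  finally show ?thesis .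
qed

lemma card_exchange_Int_exchange:
  assumes "finite (A \<inter> B)" "j \<in> A \<inter> B" "i \<notin> A \<inter> B"
  shows "card (exchange i j A \<inter> exchange i j B) = card (A \<inter> B)"
proof -
  have "exchange i j A \<inter> exchange i j B = exchange i j (A \<inter> B)"
    by (auto simp: exchange_def)
  with assms show ?thesis by (simp add: card_exchange)
qed

lemma card_exchange_Int:
  assumes "finite A" "j \<in> A" "i \<notin> A" "i \<in> B \<longleftrightarrow> j \<in> B"
  shows "card (exchange i j A \<inter> B) = card (A \<inter> B)"
proof (cases "j \<in> B")
  case True
  then have "exchange i j A \<inter> B = exchange i j (A \<inter> B)"
    using assms(4) by (auto simp: exchange_def)
  with True assms(1-3) show ?thesis by (simp add: card_exchange)
next
  case False
  then have "exchange i j A \<inter> B = A \<inter> B"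
    using assms(4) by (auto simp: exchange_def)
  then show ?thesis by simp
qed

lemma card_Int_exchange_less:
  assumes "finite B" "j \<in> A \<inter> B" "i \<notin> A"
  shows "card (A \<inter> exchange i j B) < card (A \<inter> B)"
proof -
  have "A \<inter> exchange i j B = A \<inter> B - {j}"
    using assms(3) by (auto simp: exchange_def)
  moreover have "finite (A \<inter> B)" using assms(1) by simp
  ultimately show ?thesis using assms(2) by (simp only: card_Diff1_less)
qed

lemma exchange_eq_if_card_Int:
  assumes "finite A" "finite B" "card A = card B" "j \<in> A" "i \<notin> A" "j \<notin> B" "i \<in> B"
    and "card (A \<inter> B) = card A - 1"
  shows "exchange i j A = B"
proof -
  have "A \<inter> B \<subseteq> A - {j}" using assms(6) by blast
  moreover have "card (A - {j}) = card (A \<inter> B)" using assms(1,4,8) by simp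
  ultimately have "A \<inter> B = A - {j}" using assms(1) by (simp add: card_subset_eq)
  then have "exchange i j A \<subseteq> B" using assms(7) by (auto simp: exchange_def)
  moreover have "card (exchange i j A) = card B" using assms(1,3-5) by (simp add: card_exchange)
  ultimately show ?thesis using assms(2) by (simp add: card_subset_eq)
qed

definition moving :: "nat \<Rightarrow> nat \<Rightarrow> nat set set \<Rightarrow> nat set \<Rightarrow> bool" where
  "moving i j \<A> A \<longleftrightarrow> j \<in> A \<and> i \<notin> A \<and> exchange i j A \<notin> \<A>"

definition blocked :: "nat \<Rightarrow> nat \<Rightarrow> nat set set \<Rightarrow> nat set \<Rightarrow> bool" where
  "blocked i j \<A> A \<longleftrightarrow> j \<in> A \<and> i \<notin> A \<and> exchange i j A \<in> \<A>"

lemma shift_set_moving: "moving i j \<A> A \<Longrightarrow> shift_set i j \<A> A = exchange i j A"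
  by (simp add: moving_def shift_set_def exchange_def)

lemma shift_set_not_moving: "\<not> moving i j \<A> A \<Longrightarrow> shift_set i j \<A> A = A"
  by (auto simp: moving_def shift_set_def exchange_def)

lemma shift_set_exchange: "shift_set i j \<A> (exchange i j A) = exchange i j A"
  by (simp add: shift_set_def exchange_def)

lemma shift_set_in_family_iff:
  "A \<in> \<A> \<Longrightarrow> shift_set i j \<A> A \<in> \<A> \<longleftrightarrow> \<not> moving i j \<A> A"
  by (cases "moving i j \<A> A") (simp_all add: shift_set_moving shift_set_not_moving moving_def)

lemma inj_on_shift_set: "inj_on (shift_set i j \<A>) \<A>"
proof (rule inj_onI)
  fix A B assume AB: "A \<in> \<A>" "B \<in> \<A>" and eq: "shift_set i j \<A> A = shift_set i j \<A> B"
  then have "moving i j \<A> A \<longleftrightarrow> moving i j \<A> B"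
    by (metis shift_set_in_family_iff)
  then show "A = B"
  proof (cases "moving i j \<A> A")
    case True
    with eq \<open>moving i j \<A> A \<longleftrightarrow> moving i j \<A> B\<close> show ?thesis
      using inj_on_exchange by (simp add: shift_set_moving moving_def inj_on_def)
  next
    case False
    with eq \<open>moving i j \<A> A \<longleftrightarrow> moving i j \<A> B\<close> show ?thesis
      by (simp add: shift_set_not_moving)
  qed
qed

definition adjacent_pairs :: "nat \<Rightarrow> nat set set \<Rightarrow> nat set set set" where
  "adjacent_pairs k \<A> =
     {{F, G} | F G. F \<in> \<A> \<and> G \<in> \<A> \<and> F \<noteq> G \<and> card (F \<inter> G) = k - 1}"

lemma zeta_eq_card_adjacent_pairs: "zeta k \<A> = card (adjacent_pairs k \<A>)"
  by (simp add: zeta_def adjacent_pairs_def)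

lemma adjacent_pairsE:
  assumes "P \<in> adjacent_pairs k \<A>"
  obtains F G where "P = {F, G}" "F \<in> \<A>" "G \<in> \<A>" "F \<noteq> G" "card (F \<inter> G) = k - 1"
  using assms by (auto simp: adjacent_pairs_def)

lemma doubleton_in_adjacent_pairs_iff:
  "{F, G} \<in> adjacent_pairs k \<A> \<longleftrightarrow> F \<in> \<A> \<and> G \<in> \<A> \<and> F \<noteq> G \<and> card (F \<inter> G) = k - 1"
  unfolding adjacent_pairs_def by (auto simp: doubleton_eq_iff Int_commute)

lemma finite_adjacent_pairs: "finite \<A> \<Longrightarrow> finite (adjacent_pairs k \<A>)"
  by (rule finite_subset[of _ "Pow \<A>"]) (auto simp: adjacent_pairs_def)

definition shift_pair :: "nat \<Rightarrow> nat \<Rightarrow> nat set set \<Rightarrow> nat set set \<Rightarrow> nat set set" where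
  "shift_pair i j \<A> P =
     (if \<exists>F G. P = {F, G} \<and> moving i j \<A> F \<and> blocked i j \<A> G
      then exchange i j ` P else shift_set i j \<A> ` P)"

locale uniform_family =
  fixes k :: nat and \<A> :: "nat set set"
  assumes finite_family: "finite \<A>"
    and finite_member: "A \<in> \<A> \<Longrightarrow> finite A"
    and card_member: "A \<in> \<A> \<Longrightarrow> card A = k"
begin

lemma exchange_pair_in_adjacent_pairs:
  assumes "{F, G} \<in> adjacent_pairs k \<A>" "moving i j \<A> F" "blocked i j \<A> G"
  shows "{exchange i j F, exchange i j G} \<in> adjacent_pairs k (shift i j \<A>)"
proof -
  have FG: "F \<in> \<A>" "G \<in> \<A>" "F \<noteq> G" "card (F \<inter> G) = k - 1"
    using assms(1) by (simp_all add: doubleton_in_adjacent_pairs_iff)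
  have "exchange i j F = shift_set i j \<A> F" using assms(2) by (simp add: shift_set_moving)
  moreover have "exchange i j G = shift_set i j \<A> (exchange i j G)"
    by (simp add: shift_set_exchange)
  ultimately have "exchange i j F \<in> shift i j \<A>" "exchange i j G \<in> shift i j \<A>"
    using FG(1) assms(3) by (auto simp: shift_def blocked_def)
  moreover have "exchange i j F \<noteq> exchange i j G"
    using FG(3) assms(2,3) inj_on_exchange by (auto simp: moving_def blocked_def inj_on_def)
  moreover have "card (exchange i j F \<inter> exchange i j G) = k - 1"
    using FG assms(2,3) finite_member by (simp add: card_exchange_Int_exchange moving_def blocked_def)
  ultimately show ?thesis by (simp add: doubleton_in_adjacent_pairs_iff)
qed

text \<open>A set that neither moves nor is blocked satisfies \<open>j \<in> G \<longrightarrow> i \<in> G\<close>; if moreover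
  \<open>j \<notin> G\<close> and \<open>i \<in> G\<close>, adjacency forces \<open>G = \<sigma> F\<close>, contradicting that \<open>F\<close> moves.\<close>
lemma card_exchange_Int_unblocked:
  assumes "F \<in> \<A>" "G \<in> \<A>" "card (F \<inter> G) = k - 1"
    and "moving i j \<A> F" "\<not> moving i j \<A> G" "\<not> blocked i j \<A> G"
  shows "card (exchange i j F \<inter> G) = k - 1"
proof (cases "i \<in> G \<longleftrightarrow> j \<in> G")
  case True
  with assms show ?thesis
    using finite_member by (simp add: card_exchange_Int moving_def)
next
  case False
  then have "j \<notin> G" "i \<in> G" using assms(5,6) by (auto simp: moving_def blocked_def)
  then have "exchange i j F = G"
    using assms(1-4) finite_member card_member by (intro exchange_eq_if_card_Int) (auto simp: moving_def)
  with assms(2,4) show ?thesis by (simp add: moving_def)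
qed

lemma shift_set_pair_in_adjacent_pairs:
  assumes "{F, G} \<in> adjacent_pairs k \<A>"
    and "\<not> (moving i j \<A> F \<and> blocked i j \<A> G)" "\<not> (moving i j \<A> G \<and> blocked i j \<A> F)"
  shows "{shift_set i j \<A> F, shift_set i j \<A> G} \<in> adjacent_pairs k (shift i j \<A>)"
proof -
  have FG: "F \<in> \<A>" "G \<in> \<A>" "F \<noteq> G" "card (F \<inter> G) = k - 1"
    using assms(1) by (simp_all add: doubleton_in_adjacent_pairs_iff)
  have "card (shift_set i j \<A> F \<inter> shift_set i j \<A> G) = k - 1"
  proof (cases "moving i j \<A> F"; cases "moving i j \<A> G")
    assume "moving i j \<A> F" "moving i j \<A> G"
    then show ?thesis
      using FG finite_member by (simp add: shift_set_moving card_exchange_Int_exchange moving_def)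
  next
    assume "moving i j \<A> F" "\<not> moving i j \<A> G"
    then show ?thesis
      using FG assms(2) by (simp add: shift_set_moving shift_set_not_moving card_exchange_Int_unblocked)
  next
    assume "\<not> moving i j \<A> F" "moving i j \<A> G"
    then show ?thesis
      using FG assms(3) card_exchange_Int_unblocked[of G F]
      by (simp add: shift_set_moving shift_set_not_moving Int_commute)
  next
    assume "\<not> moving i j \<A> F" "\<not> moving i j \<A> G"
    then show ?thesis using FG by (simp add: shift_set_not_moving)
  qed
  moreover have "shift_set i j \<A> F \<noteq> shift_set i j \<A> G"
    using FG inj_on_shift_set by (metis inj_on_contraD)
  ultimately show ?thesis
    using FG(1,2) by (simp add: doubleton_in_adjacent_pairs_iff shift_def)
qed

lemma shift_pair_in_adjacent_pairs:
  assumes "P \<in> adjacent_pairs k \<A>"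
  shows "shift_pair i j \<A> P \<in> adjacent_pairs k (shift i j \<A>)"
proof (cases "\<exists>F G. P = {F, G} \<and> moving i j \<A> F \<and> blocked i j \<A> G")
  case True
  then obtain F G where "P = {F, G}" "moving i j \<A> F" "blocked i j \<A> G" by blast
  moreover have "shift_pair i j \<A> P = exchange i j ` P"
    unfolding shift_pair_def using True by (rule if_P)
  ultimately show ?thesis
    using assms by (simp add: exchange_pair_in_adjacent_pairs)
next
  case False
  obtain F G where P: "P = {F, G}" using assms by (rule adjacent_pairsE)
  have "\<not> (moving i j \<A> F \<and> blocked i j \<A> G)" using False P by blast
  moreover have "\<not> (moving i j \<A> G \<and> blocked i j \<A> F)"
    using False P insert_commute by blast
  moreover have "shift_pair i j \<A> P = shift_set i j \<A> ` P"
    unfolding shift_pair_def using False by (rule if_not_P)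
  ultimately show ?thesis
    using assms P by (simp add: shift_set_pair_in_adjacent_pairs)
qed

text \<open>The exchanged image of a pair \<open>{F, G}\<close> with \<open>F\<close> moving and \<open>G\<close> blocked is the shift of
  \<open>{F, \<sigma> G}\<close>, which is not an adjacent pair.\<close>
lemma exchange_pair_not_shift_set_image:
  assumes "{F, G} \<in> adjacent_pairs k \<A>" "moving i j \<A> F" "blocked i j \<A> G"
    and "Q \<in> adjacent_pairs k \<A>"
  shows "exchange i j ` {F, G} \<noteq> shift_set i j \<A> ` Q"
proof
  assume collision: "exchange i j ` {F, G} = shift_set i j \<A> ` Q"
  have FG: "F \<in> \<A>" "card (F \<inter> G) = k - 1"
    using assms(1) by (simp_all add: doubleton_in_adjacent_pairs_iff)
  have "exchange i j ` {F, G} = shift_set i j \<A> ` {F, exchange i j G}"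
    using assms(2) by (simp add: shift_set_moving shift_set_exchange)
  moreover have "{F, exchange i j G} \<subseteq> \<A>" "Q \<subseteq> \<A>"
    using FG(1) assms(3,4) by (auto simp: blocked_def elim: adjacent_pairsE)
  ultimately have "Q = {F, exchange i j G}"
    using collision inj_on_shift_set by (metis inj_on_image_eq_iff)
  then have "card (F \<inter> exchange i j G) = k - 1"
    using assms(4) by (simp add: doubleton_in_adjacent_pairs_iff)
  moreover have "card (F \<inter> exchange i j G) < card (F \<inter> G)"
    using assms(1-3) finite_member
    by (intro card_Int_exchange_less) (auto simp: moving_def blocked_def doubleton_in_adjacent_pairs_iff)
  ultimately show False using FG(2) by simp
qed

lemma inj_on_shift_pair: "inj_on (shift_pair i j \<A>) (adjacent_pairs k \<A>)"
proof (rule inj_onI)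
  fix P Q
  assume P: "P \<in> adjacent_pairs k \<A>" and Q: "Q \<in> adjacent_pairs k \<A>"
    and eq: "shift_pair i j \<A> P = shift_pair i j \<A> Q"
  let ?mixed = "\<lambda>R. \<exists>F G. R = {F, G} \<and> moving i j \<A> F \<and> blocked i j \<A> G"
  have mixed: "shift_pair i j \<A> R = exchange i j ` R" if "?mixed R" for R
    unfolding shift_pair_def using that by (rule if_P)
  have unmixed: "shift_pair i j \<A> R = shift_set i j \<A> ` R" if "\<not> ?mixed R" for R
    unfolding shift_pair_def using that by (rule if_not_P)
  have no_collision: "exchange i j ` R \<noteq> shift_set i j \<A> ` R'"
    if mix: "?mixed R" and adj: "R \<in> adjacent_pairs k \<A>" "R' \<in> adjacent_pairs k \<A>" for R R'
  proof -
    obtain F G where "R = {F, G}" "moving i j \<A> F" "blocked i j \<A> G" using mix by blast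
    then show ?thesis using adj exchange_pair_not_shift_set_image[of F G] by simp
  qed
  show "P = Q"
  proof (cases "?mixed P"; cases "?mixed Q")
    assume "?mixed P" "?mixed Q"
    then have "P \<union> Q \<subseteq> {A. j \<in> A \<and> i \<notin> A}"
      by (auto simp: moving_def blocked_def)
    then have "inj_on (exchange i j) (P \<union> Q)"
      using inj_on_exchange by (rule inj_on_subset[rotated])
    with eq \<open>?mixed P\<close> \<open>?mixed Q\<close> show ?thesis
      by (simp add: mixed inj_on_Un_image_eq_iff)
  next
    assume "?mixed P" "\<not> ?mixed Q"
    with eq P Q show ?thesis by (simp add: mixed unmixed no_collision)
  next
    assume "\<not> ?mixed P" "?mixed Q"
    with eq P Q show ?thesis by (simp add: mixed unmixed no_collision[symmetric])
  next
    assume "\<not> ?mixed P" "\<not> ?mixed Q"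
    with eq have "shift_set i j \<A> ` P = shift_set i j \<A> ` Q" by (metis unmixed)
    moreover have "P \<subseteq> \<A>" "Q \<subseteq> \<A>" using P Q by (auto elim: adjacent_pairsE)
    ultimately show ?thesis by (simp add: inj_on_image_eq_iff[OF inj_on_shift_set])
  qed
qed

theorem zeta_le_zeta_shift: "zeta k \<A> \<le> zeta k (shift i j \<A>)"
proof -
  have "shift_pair i j \<A> ` adjacent_pairs k \<A> \<subseteq> adjacent_pairs k (shift i j \<A>)"
    using shift_pair_in_adjacent_pairs by blast
  moreover have "finite (adjacent_pairs k (shift i j \<A>))"
    using finite_family by (simp add: shift_def finite_adjacent_pairs)
  ultimately show ?thesis
    unfolding zeta_eq_card_adjacent_pairs by (rule card_inj_on_le[OF inj_on_shift_pair])
qed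

end

theorem lemma2p2:
  fixes n k t i j :: nat and \<A> :: "nat set set"
  assumes "\<forall>A\<in>\<A>. A \<subseteq> {1..n} \<and> card A = k"
    and "t_intersecting t \<A>"
    and "1 \<le> i" and "i < j" and "j \<le> n"
  shows "zeta k (shift i j \<A>) \<ge> zeta k \<A>"
proof -
  have "\<A> \<subseteq> Pow {1..n}" using assms(1) by blast
  then have "finite \<A>" by (rule finite_subset) simp
  moreover have "finite A" "card A = k" if "A \<in> \<A>" for A
    using assms(1) that finite_subset[of A "{1..n}"] by auto
  ultimately have "uniform_family k \<A>" by unfold_locales
  then show ?thesis by (rule uniform_family.zeta_le_zeta_shift)
qed

end
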